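(* Let $\Pi=(\mathsf A,\mathsf B)$ be a protocol and $z\in\mathbb N$. Then (1) $C^{\mathsf A,z}_\Pi$ is a measure over the $1$-leaves of $\Pi$: $C^{\mathsf A,z}_\Pi(\ell)\in[0,1]$ for every leaf $\ell$, and $C^{\mathsf A,z}_\Pi(\ell)=0$ whenever $\chi_\Pi(\ell)=0$; and (2) $\mathbb E_{\ell\leftarrow L_\Pi}[C^{\mathsf A,z}_\Pi(\ell)]=\sum_{j=0}^{z}\alpha_j\prod_{t=0}^{j-1}(1-\beta_t)(1-\alpha_t)$, where $\alpha_j=1-\mathrm{Best}_{\mathsf B}(\Pi_{(\mathsf A,j)})$, $\beta_j=1-\mathrm{Best}_{\mathsf A}(\Pi_{(\mathsf B,j)})$, and $\mathrm{Best}_{\mathsf A}(\perp)=\mathrm{Best}_{\mathsf B}(\perp)=1$.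
   Context: Protocols are $m$-round single-bit-message protocols identified with the complete binary tree of height $m$, with control scheme, edge probabilities $e_\Pi(u,ub)$, output $\chi_\Pi:\text{leaves}\to\{0,1\}$, visit probabilities $v_\Pi(u)$, leaf distribution $L_\Pi$; $\Pi_u$ is the subprotocol under node $u$ (or $\perp$ if $v_\Pi(u)=0$); expectations over $L_\perp$ are $0$; $\mathbb E_{L_{\Pi_u}}[M]$ is the expectation of the restriction of $M$ to leaves under $u$. $\mathsf A$-dominated measure $M^{\mathsf A}_\Pi$: for a 0-round protocol with leaf $\ell$, $M^{\mathsf A}_\Pi(\ell)=\chi_\Pi(\ell)$; otherwise for a leaf with first bit $b$, with $\mu_c=\mathbb E_{L_{\Pi_c}}[M^{\mathsf A}_{\Pi_c}]$: value $0$ if $e_\Pi(\lambda,b)=0$; $M^{\mathsf A}_{\Pi_b}(\ell)$ if $e_\Pi(\lambda,b)=1$, or if $e_\Pi(\lambda,b)\in(0,1)$ and ($\mathsf A$ controls the root or $\mu_b\le\mu_{1-b}$); $\frac{\mu_{1-b}}{\mu_b}M^{\mathsf A}_{\Pi_b}(\ell)$ otherwise. The $\mathsf B$-dominated measure $M^{\mathsf B}_\Pi$ is defined identically with $\mathsf A,\mathsf B$ exchanged and with base case $M^{\mathsf B}_\Pi(\ell)=1-\chi_\Pi(\ell)$. $M^{\mathsf A}_\perp,M^{\mathsf B}_\perp$ are the zero measure. Conditional protocol: for $\mathbb E_{L_\Pi}[M]<1$, $\Pi|_M$ has the same control and output and $e_{\Pi|_M}(u,ub)=0$ if $\mathbb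 E_{L_{\Pi_u}}[M]=1$, else $e_\Pi(u,ub)\frac{1-\mathbb E_{L_{\Pi_{ub}}}[M]}{1-\mathbb E_{L_{\Pi_u}}[M]}$; if $\mathbb E_{L_\Pi}[M]=1$ or $\Pi=\perp$, $\Pi|_M=\perp$. Sequence: $\Pi_{(\mathsf A,0)}=\Pi$, $\Pi_{(\mathsf B,j)}=\Pi_{(\mathsf A,j)}|_{M^{\mathsf A}_{\Pi_{(\mathsf A,j)}}}$, $\Pi_{(\mathsf A,j+1)}=\Pi_{(\mathsf B,j)}|_{M^{\mathsf B}_{\Pi_{(\mathsf B,j)}}}$. $C^{\mathsf A,z}_\Pi=\sum_{j=0}^z M^{\mathsf A}_{\Pi_{(\mathsf A,j)}}\prod_{t=0}^{j-1}(1-M^{\mathsf A}_{\Pi_{(\mathsf A,t)}})$ (pointwise on leaves). Valid attackers: deterministic strategies that never reach nodes unreachable in the honest protocol; $\mathrm{Best}_{\mathsf A}(\Pi')$ is the max over valid $\mathsf A'$ of the expected output of $(\mathsf A',\mathsf B)$, and $\mathrm{Best}_{\mathsf B}(\Pi')$ is the max over valid $\mathsf B'$ of $1$ minus the expected output of $(\mathsf A,\mathsf B')$. *)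

theory Defs
  imports Complex_Main
begin

text \<open>An m-round single-bit-message protocol, identified with the complete binary
tree of height m. Nodes are bit strings (bool lists) of length at most m,
the root is the empty list and the children of u are u @ [b].
ctrlA u: True iff party A controls node u (False: B controls it).
edge u b: the edge probability e(u, u b).
out l: the output chi(l) of leaf l (True = 1, False = 0).\<close>

record proto =
  rounds :: nat
  ctrlA  :: "bool list \<Rightarrow> bool"
  edge   :: "bool list \<Rightarrow> bool \<Rightarrow> real"
  out    :: "bool list \<Rightarrow> bool"

definition valid_proto :: "proto \<Rightarrow> bool" where
  "valid_proto P \<longleftrightarrow>
     (\<forall>u. length u < rounds P \<longrightarrow>
        (\<forall>b. 0 \<le> edge P u b) \<and> edge P u False + edge P u True = 1)"

definition leaves :: "proto \<Rightarrow> bool list set" where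
  "leaves P = {l. length l = rounds P}"

definition vis :: "proto \<Rightarrow> bool list \<Rightarrow> real" where
  "vis P u = (\<Prod>i<length u. edge P (take i u) (u ! i))"

text \<open>Expectation of a measure over the leaf distribution; None plays the role of bottom.\<close>
definition expect :: "proto option \<Rightarrow> (bool list \<Rightarrow> real) \<Rightarrow> real" where
  "expect Q M = (case Q of None \<Rightarrow> 0
                 | Some P \<Rightarrow> (\<Sum>l\<in>leaves P. vis P l * M l))"

definition sub :: "proto \<Rightarrow> bool list \<Rightarrow> proto option" where
  "sub P u = (if vis P u = 0 then None else
      Some \<lparr> rounds = rounds P - length u,
             ctrlA = (\<lambda>w. ctrlA P (u @ w)),
             edge = (\<lambda>w b. edge P (u @ w) b),
             out = (\<lambda>w. out P (u @ w)) \<rparr>)"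

definition expect_under :: "proto \<Rightarrow> bool list \<Rightarrow> (bool list \<Rightarrow> real) \<Rightarrow> real" where
  "expect_under P u M = expect (sub P u) (\<lambda>w. M (u @ w))"

text \<open>Dominated measures. Party p: True = A, False = B.
  domM_aux p n P is the p-dominated measure of an n-round protocol P.\<close>
primrec domM_aux :: "bool \<Rightarrow> nat \<Rightarrow> proto \<Rightarrow> bool list \<Rightarrow> real" where
  "domM_aux p 0 P l = (if out P l = p then 1 else 0)"
| "domM_aux p (Suc n) P l =
     (let b = hd l;
          Mb = (case sub P [b] of None \<Rightarrow> (\<lambda>_. 0) | Some Q \<Rightarrow> domM_aux p n Q);
          Mo = (case sub P [\<not> b] of None \<Rightarrow> (\<lambda>_. 0) | Some Q \<Rightarrow> domM_aux p n Q);
          \<mu>b = expect (sub P [b]) Mb;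
          \<mu>o = expect (sub P [\<not> b]) Mo;
          e = edge P [] b
      in if e = 0 then 0
         else if e = 1 \<or> ctrlA P [] = p \<or> \<mu>b \<le> \<mu>o then Mb (tl l)
         else \<mu>o / \<mu>b * Mb (tl l))"

definition domM :: "bool \<Rightarrow> proto option \<Rightarrow> bool list \<Rightarrow> real" where
  "domM p Q = (case Q of None \<Rightarrow> (\<lambda>_. 0) | Some P \<Rightarrow> domM_aux p (rounds P) P)"

definition cond :: "proto option \<Rightarrow> (bool list \<Rightarrow> real) \<Rightarrow> proto option" where
  "cond Q M = (case Q of None \<Rightarrow> None
     | Some P \<Rightarrow>
        (if expect (Some P) M \<ge> 1 then None
         else Some (P\<lparr> edge := (\<lambda>u b.
                 if expect_under P u M = 1 then 0
                 else edge P u b * (1 - expect_under P (u @ [b]) M)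
                        / (1 - expect_under P u M)) \<rparr>)))"

primrec seqA :: "proto \<Rightarrow> nat \<Rightarrow> proto option" where
  "seqA P 0 = Some P"
| "seqA P (Suc j) =
     (let Q = cond (seqA P j) (domM True (seqA P j)) in cond Q (domM False Q))"

definition seqB :: "proto \<Rightarrow> nat \<Rightarrow> proto option" where
  "seqB P j = cond (seqA P j) (domM True (seqA P j))"

definition CA :: "proto \<Rightarrow> nat \<Rightarrow> bool list \<Rightarrow> real" where
  "CA P z l = (\<Sum>j\<le>z. domM True (seqA P j) l *
                        (\<Prod>t<j. 1 - domM True (seqA P t) l))"

text \<open>Attacks: party p replaced by the deterministic strategy sigma (choosing the bit
sigma u at every node u it controls); the other party stays honest.\<close>
definition attack :: "proto \<Rightarrow> bool \<Rightarrow> (bool list \<Rightarrow> bool) \<Rightarrow> proto" where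
  "attack P p \<sigma> = P\<lparr> edge := (\<lambda>u b. if ctrlA P u = p
                                    then (if \<sigma> u = b then 1 else 0)
                                    else edge P u b) \<rparr>"

definition valid_attack :: "proto \<Rightarrow> bool \<Rightarrow> (bool list \<Rightarrow> bool) \<Rightarrow> bool" where
  "valid_attack P p \<sigma> \<longleftrightarrow>
     (\<forall>u. length u \<le> rounds P \<longrightarrow> vis (attack P p \<sigma>) u > 0 \<longrightarrow> vis P u > 0)"

definition out_exp :: "proto \<Rightarrow> real" where
  "out_exp P = (\<Sum>l\<in>leaves P. vis P l * (if out P l then 1 else 0))"

definition BestA :: "proto option \<Rightarrow> real" where
  "BestA Q = (case Q of None \<Rightarrow> 1
     | Some P \<Rightarrow> Sup {out_exp (attack P True \<sigma>) | \<sigma>. valid_attack P True \<sigma>})"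

definition BestB :: "proto option \<Rightarrow> real" where
  "BestB Q = (case Q of None \<Rightarrow> 1
     | Some P \<Rightarrow> Sup {1 - out_exp (attack P False \<sigma>) | \<sigma>. valid_attack P False \<sigma>})"

definition alpha :: "proto \<Rightarrow> nat \<Rightarrow> real" where
  "alpha P j = 1 - BestB (seqA P j)"

definition beta :: "proto \<Rightarrow> nat \<Rightarrow> real" where
  "beta P j = 1 - BestA (seqB P j)"

end

theory Submission
  imports Defs
begin

text \<open>For an honestly played protocol, the expectation of the p-dominated measure equals the
  least probability of output p that the opponent of p can enforce by a valid attack. At a node
  controlled by p both quantities average over the honest edges; at a node of the opponent the
  measure rescales the heavier child so that both children carry the smaller of the two subtree
  values, which is what a best attacker picks. Hence alpha j and beta j are the expectations of
  the A-dominated measure of Pi_(A,j) and of the B-dominated measure of Pi_(B,j).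

  Conditioning on a measure M reweights each leaf l by (1 - M l) / (1 - E[M]), so that
  E[(1 - M) g] = (1 - E[M]) E_(Pi|M)[g]. A-dominated measures vanish on 0-leaves and B-dominated
  ones on 1-leaves, so the j-th summand of C^(A,z) may be multiplied by the factors 1 - M^B_t for
  t < j; conditioning twice per round then turns its expectation into
  alpha j * prod_(t<j) (1 - beta t) (1 - alpha t). Part (1) is the telescoping identity
  C^(A,z) = 1 - prod_(t<=z) (1 - M^A_t).\<close>

section \<open>Subtrees and visit probabilities\<close>

definition subtree :: "proto \<Rightarrow> bool list \<Rightarrow> proto" where
  "subtree P u = \<lparr> rounds = rounds P - length u,
                   ctrlA = (\<lambda>w. ctrlA P (u @ w)),
                   edge = (\<lambda>w b. edge P (u @ w) b),
                   out = (\<lambda>w. out P (u @ w)) \<rparr>"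

lemma sub_eq_subtree: "sub P u = (if vis P u = 0 then None else Some (subtree P u))"
  by (simp add: sub_def subtree_def)

lemma subtree_simps [simp]:
  "rounds (subtree P u) = rounds P - length u"
  "ctrlA (subtree P u) w = ctrlA P (u @ w)"
  "edge (subtree P u) w b = edge P (u @ w) b"
  "out (subtree P u) w = out P (u @ w)"
  by (simp_all add: subtree_def)

lemma subtree_Nil [simp]: "subtree P [] = P"
  by (cases P) (simp add: subtree_def)

lemma subtree_subtree [simp]: "subtree (subtree P u) v = subtree P (u @ v)"
  by (simp add: subtree_def)

lemma vis_Nil [simp]: "vis P [] = 1"
  by (simp add: vis_def)

lemma vis_snoc: "vis P (u @ [b]) = vis P u * edge P u b"
proof -
  have "(\<Prod>i<length u. edge P (take i (u @ [b])) ((u @ [b]) ! i)) = vis P u"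
    unfolding vis_def by (rule prod.cong) (auto simp: nth_append)
  then show ?thesis
    by (simp add: vis_def)
qed

lemma vis_append: "vis P (u @ v) = vis P u * vis (subtree P u) v"
proof (induction v rule: rev_induct)
  case (snoc b v)
  then show ?case
    using vis_snoc[of P "u @ v" b] vis_snoc[of "subtree P u" v b] by simp
qed simp

lemma vis_single [simp]: "vis P [b] = edge P [] b"
  using vis_snoc[of P "[]" b] by simp

lemma vis_Cons: "vis P (b # w) = edge P [] b * vis (subtree P [b]) w"
  using vis_append[of P "[b]" w] by simp

lemma vis_nonneg:
  assumes "\<And>u b. length u < rounds P \<Longrightarrow> 0 \<le> edge P u b" and "length v \<le> rounds P"
  shows "0 \<le> vis P v"
  unfolding vis_def using assms by (auto intro!: prod_nonneg)

lemma finite_bool_lists_length [simp]: "finite {l :: bool list. length l = n}"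
  using finite_lists_length_eq[of "UNIV :: bool set" n] by simp

lemma finite_leaves [simp]: "finite (leaves P)"
  by (simp add: leaves_def)

lemma sum_bool_lists_length_Suc:
  "(\<Sum>l | length l = Suc n. g l) = (\<Sum>w | length w = n. g (True # w)) + (\<Sum>w | length w = n. g (False # w))"
proof -
  have "{l :: bool list. length l = Suc n} = Cons True ` {w. length w = n} \<union> Cons False ` {w. length w = n}"
    by (auto simp: length_Suc_conv)
  then have "(\<Sum>l | length l = Suc n. g l) =
      (\<Sum>l\<in>Cons True ` {w. length w = n}. g l) + (\<Sum>l\<in>Cons False ` {w. length w = n}. g l)"
    by (simp only:) (rule sum.union_disjoint, auto)
  then show ?thesis
    by (simp add: sum.reindex)
qed

lemma leaf_sum_first_bit:
  assumes "rounds P = Suc n"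
  shows "(\<Sum>l\<in>leaves P. vis P l * g l) =
     edge P [] True * (\<Sum>w | length w = n. vis (subtree P [True]) w * g (True # w)) +
     edge P [] False * (\<Sum>w | length w = n. vis (subtree P [False]) w * g (False # w))"
  unfolding leaves_def assms sum_bool_lists_length_Suc
  by (simp add: vis_Cons sum_distrib_left mult.assoc)

section \<open>Stochastic protocols\<close>

text \<open>Conditioning sets both edges to 0 at the nodes it makes unreachable, so normalisation is
  required only where the visit probability is positive.\<close>

definition stochastic :: "proto \<Rightarrow> bool" where
  "stochastic P \<longleftrightarrow> (\<forall>u b. length u < rounds P \<longrightarrow> 0 \<le> edge P u b) \<and>
     (\<forall>u. length u < rounds P \<longrightarrow> 0 < vis P u \<longrightarrow> edge P u False + edge P u True = 1)"

lemma stochastic_edge_nonneg: "stochastic P \<Longrightarrow> length u < rounds P \<Longrightarrow> 0 \<le> edge P u b"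
  by (simp add: stochastic_def)

lemma stochastic_edge_sum:
  "stochastic P \<Longrightarrow> length u < rounds P \<Longrightarrow> 0 < vis P u \<Longrightarrow> edge P u False + edge P u True = 1"
  by (simp add: stochastic_def)

lemma stochastic_vis_nonneg: "stochastic P \<Longrightarrow> length v \<le> rounds P \<Longrightarrow> 0 \<le> vis P v"
  by (rule vis_nonneg) (simp_all add: stochastic_edge_nonneg)

lemma valid_proto_stochastic: "valid_proto P \<Longrightarrow> stochastic P"
  by (simp add: valid_proto_def stochastic_def)

lemma stochastic_subtree:
  assumes "stochastic P" and "0 < vis P u"
  shows "stochastic (subtree P u)"
  unfolding stochastic_def
proof (intro conjI allI impI)
  fix w :: "bool list" and b assume "length w < rounds (subtree P u)"
  then show "0 \<le> edge (subtree P u) w b"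
    using stochastic_edge_nonneg[OF assms(1), of "u @ w"] by simp
next
  fix w :: "bool list" assume "length w < rounds (subtree P u)" and "0 < vis (subtree P u) w"
  then show "edge (subtree P u) w False + edge (subtree P u) w True = 1"
    using stochastic_edge_sum[OF assms(1), of "u @ w"] assms(2) by (simp add: vis_append)
qed

lemma stochastic_vis_pos_iff: "stochastic P \<Longrightarrow> length u \<le> rounds P \<Longrightarrow> 0 < vis P u \<longleftrightarrow> vis P u \<noteq> 0"
  using stochastic_vis_nonneg by fastforce

lemma leaf_mass_stochastic: "stochastic P \<Longrightarrow> (\<Sum>l\<in>leaves P. vis P l) = 1"
proof (induction "rounds P" arbitrary: P)
  case 0
  then show ?case by (simp add: leaves_def)
next
  case (Suc n)
  have child: "edge P [] b * (\<Sum>w | length w = n. vis (subtree P [b]) w) = edge P [] b" for b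
  proof (cases "edge P [] b = 0")
    case False
    then have "0 < vis P [b]"
      using stochastic_vis_pos_iff[OF Suc.prems, of "[b]"] Suc.hyps(2) by simp
    then have "stochastic (subtree P [b])"
      using stochastic_subtree[OF Suc.prems] by blast
    moreover have "n = rounds (subtree P [b])"
      using Suc.hyps(2) by simp
    ultimately have "(\<Sum>w\<in>leaves (subtree P [b]). vis (subtree P [b]) w) = 1"
      using Suc.hyps(1) by blast
    then show ?thesis
      using Suc.hyps(2)[symmetric] by (simp add: leaves_def)
  qed simp
  have "(\<Sum>l\<in>leaves P. vis P l) =
      edge P [] True * (\<Sum>w | length w = n. vis (subtree P [True]) w) +
      edge P [] False * (\<Sum>w | length w = n. vis (subtree P [False]) w)"
    using leaf_sum_first_bit[of P n "\<lambda>_. 1"] Suc.hyps(2) by simp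
  also have "\<dots> = 1"
    using stochastic_edge_sum[OF Suc.prems, of "[]"] Suc.hyps(2) by (simp add: child)
  finally show ?case .
qed

lemma expect_bounds:
  assumes "stochastic P" and "\<And>l. l \<in> leaves P \<Longrightarrow> 0 \<le> M l \<and> M l \<le> 1"
  shows "0 \<le> expect (Some P) M \<and> expect (Some P) M \<le> 1"
proof -
  have vis: "0 \<le> vis P l" if "l \<in> leaves P" for l
    using stochastic_vis_nonneg[OF assms(1)] that by (simp add: leaves_def)
  have "(\<Sum>l\<in>leaves P. vis P l * M l) \<le> (\<Sum>l\<in>leaves P. vis P l)"
    using vis assms(2) by (intro sum_mono) (simp add: mult_left_le)
  then show ?thesis
    using vis assms(2) leaf_mass_stochastic[OF assms(1)] by (simp add: expect_def sum_nonneg)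
qed

section \<open>Conditioning\<close>

lemma expect_under_Nil: "expect_under P [] M = expect (Some P) M"
  by (simp add: expect_under_def sub_eq_subtree)

lemma expect_under_vis_0: "vis P u = 0 \<Longrightarrow> expect_under P u M = 0"
  by (simp add: expect_under_def sub_eq_subtree expect_def)

lemma expect_under_bounds:
  assumes "stochastic P" "length u \<le> rounds P" "\<And>l. l \<in> leaves P \<Longrightarrow> 0 \<le> M l \<and> M l \<le> 1"
  shows "0 \<le> expect_under P u M \<and> expect_under P u M \<le> 1"
proof (cases "vis P u = 0")
  case False
  then have "stochastic (subtree P u)"
    using stochastic_subtree stochastic_vis_pos_iff assms(1,2) by blast
  then have "0 \<le> expect (Some (subtree P u)) (\<lambda>w. M (u @ w)) \<and> expect (Some (subtree P u)) (\<lambda>w. M (u @ w)) \<le> 1"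
    using assms(2,3) by (intro expect_bounds) (auto simp: leaves_def)
  then show ?thesis
    using False by (simp add: expect_under_def sub_eq_subtree)
qed (simp add: expect_under_vis_0)

lemma vis_expect_under_leaf:
  assumes "l \<in> leaves P"
  shows "vis P l * expect_under P l M = vis P l * M l"
proof (cases "vis P l = 0")
  case False
  have "leaves (subtree P l) = {[]}"
    using assms by (auto simp: leaves_def)
  then show ?thesis
    using False by (simp add: expect_under_def sub_eq_subtree expect_def)
qed simp

lemma expect_under_step:
  assumes "length u < rounds P" and "vis P u \<noteq> 0"
  shows "expect_under P u M = edge P u True * expect_under P (u @ [True]) M
                            + edge P u False * expect_under P (u @ [False]) M"
proof -
  define n where "n = rounds P - length u - 1"
  have rounds: "rounds (subtree P u) = Suc n"
    using assms(1) by (simp add: n_def)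
  have child: "edge P u b * (\<Sum>w | length w = n. vis (subtree P (u @ [b])) w * M (u @ b # w))
      = edge P u b * expect_under P (u @ [b]) M" for b
  proof (cases "edge P u b = 0")
    case False
    then have "vis P (u @ [b]) \<noteq> 0"
      using assms(2) by (simp add: vis_snoc)
    moreover have "leaves (subtree P (u @ [b])) = {w. length w = n}"
      by (auto simp: leaves_def n_def)
    ultimately show ?thesis
      by (simp add: expect_under_def sub_eq_subtree expect_def)
  qed simp
  have "expect_under P u M = (\<Sum>l\<in>leaves (subtree P u). vis (subtree P u) l * M (u @ l))"
    using assms(2) by (simp add: expect_under_def sub_eq_subtree expect_def)
  also have "\<dots> = edge P u True * expect_under P (u @ [True]) M + edge P u False * expect_under P (u @ [False]) M"
    using leaf_sum_first_bit[OF rounds, of "\<lambda>l. M (u @ l)"] by (simp add: child)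
  finally show ?thesis .
qed

definition condition :: "proto \<Rightarrow> (bool list \<Rightarrow> real) \<Rightarrow> proto" where
  "condition P M = P\<lparr> edge := (\<lambda>u b.
     if expect_under P u M = 1 then 0
     else edge P u b * (1 - expect_under P (u @ [b]) M) / (1 - expect_under P u M)) \<rparr>"

lemma condition_simps [simp]:
  "rounds (condition P M) = rounds P"
  "ctrlA (condition P M) = ctrlA P"
  "out (condition P M) = out P"
  "edge (condition P M) u b = (if expect_under P u M = 1 then 0
     else edge P u b * (1 - expect_under P (u @ [b]) M) / (1 - expect_under P u M))"
  by (simp_all add: condition_def)

lemma leaves_condition [simp]: "leaves (condition P M) = leaves P"
  by (simp add: leaves_def)

lemma cond_Some: "cond (Some P) M = (if 1 \<le> expect (Some P) M then None else Some (condition P M))"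
  by (simp add: cond_def condition_def)

locale conditioning =
  fixes P :: proto and M :: "bool list \<Rightarrow> real"
  assumes stochastic: "stochastic P"
    and measure: "\<And>l. l \<in> leaves P \<Longrightarrow> 0 \<le> M l \<and> M l \<le> 1"
    and expect_less_1: "expect (Some P) M < 1"
begin

abbreviation EU :: "bool list \<Rightarrow> real" where
  "EU u \<equiv> expect_under P u M"

lemma EU_bounds: "length u \<le> rounds P \<Longrightarrow> 0 \<le> EU u \<and> EU u \<le> 1"
  by (rule expect_under_bounds[OF stochastic _ measure])

lemma EU_complement_step:
  assumes "length u < rounds P" and "0 < vis P u"
  shows "edge P u True * (1 - EU (u @ [True])) + edge P u False * (1 - EU (u @ [False])) = 1 - EU u"
  using expect_under_step[OF assms(1), of M] stochastic_edge_sum[OF stochastic assms] assms(2)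
  by (simp add: algebra_simps)

lemma EU_eq_1_child:
  assumes "length u < rounds P" and "EU u = 1"
  shows "vis P u * edge P u b * (1 - EU (u @ [b])) = 0"
proof (cases "vis P u = 0")
  case False
  then have "0 < vis P u"
    using stochastic_vis_pos_iff[OF stochastic] assms(1) by simp
  then have "edge P u True * (1 - EU (u @ [True])) + edge P u False * (1 - EU (u @ [False])) = 0"
    using EU_complement_step[OF assms(1)] assms(2) by simp
  moreover have "0 \<le> edge P u c * (1 - EU (u @ [c]))" for c
    using stochastic_edge_nonneg[OF stochastic assms(1)] EU_bounds[of "u @ [c]"] assms(1) by simp
  ultimately have "edge P u b * (1 - EU (u @ [b])) = 0"
    by (cases b) (simp_all add: add_nonneg_eq_0_iff)
  then show ?thesis by simp
qed simp

lemma vis_condition: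
  "length u \<le> rounds P \<Longrightarrow> vis (condition P M) u = vis P u * (1 - EU u) / (1 - expect (Some P) M)"
proof (induction u rule: rev_induct)
  case Nil
  then show ?case
    using expect_less_1 by (simp add: expect_under_Nil)
next
  case (snoc b u)
  then have u: "length u < rounds P" by simp
  show ?case
  proof (cases "EU u = 1")
    case True
    then show ?thesis
      using EU_eq_1_child[OF u True, of b] by (simp add: vis_snoc)
  next
    case False
    then show ?thesis
      using snoc.IH u by (simp add: vis_snoc)
  qed
qed

lemma vis_condition_leaf:
  assumes "l \<in> leaves P"
  shows "vis (condition P M) l * (1 - expect (Some P) M) = vis P l * (1 - M l)"
proof -
  have "vis P l * (1 - EU l) = vis P l * (1 - M l)"
    using vis_expect_under_leaf[OF assms, of M] by (simp add: right_diff_distrib)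
  then show ?thesis
    using vis_condition[of l] assms expect_less_1 by (simp add: leaves_def)
qed

lemma expect_condition:
  "expect (Some (condition P M)) f * (1 - expect (Some P) M) = expect (Some P) (\<lambda>l. (1 - M l) * f l)"
proof -
  have "expect (Some (condition P M)) f * (1 - expect (Some P) M)
      = (\<Sum>l\<in>leaves P. (vis (condition P M) l * (1 - expect (Some P) M)) * f l)"
    by (simp add: expect_def[of "Some (condition P M)"] sum_distrib_left mult_ac)
  also have "\<dots> = (\<Sum>l\<in>leaves P. vis P l * ((1 - M l) * f l))"
    by (rule sum.cong) (simp_all add: vis_condition_leaf mult.assoc)
  finally show ?thesis
    by (simp add: expect_def)
qed

lemma stochastic_condition: "stochastic (condition P M)"
  unfolding stochastic_def
proof (intro conjI allI impI)
  fix u :: "bool list" and b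
  assume "length u < rounds (condition P M)"
  then have u: "length u < rounds P" by simp
  show "0 \<le> edge (condition P M) u b"
    using EU_bounds[of u] EU_bounds[of "u @ [b]"] stochastic_edge_nonneg[OF stochastic u] u
    by (simp add: order_less_le)
next
  fix u :: "bool list"
  assume "length u < rounds (condition P M)" and pos: "0 < vis (condition P M) u"
  then have u: "length u < rounds P" by simp
  have "0 < vis P u * (1 - EU u)"
    using pos vis_condition[of u] u expect_less_1 by (simp add: zero_less_divide_iff)
  moreover have "0 \<le> vis P u" "EU u \<le> 1"
    using stochastic_vis_nonneg[OF stochastic] EU_bounds[of u] u by simp_all
  ultimately have "0 < vis P u" "EU u \<noteq> 1"
    by (auto simp: zero_less_mult_iff)
  then show "edge (condition P M) u False + edge (condition P M) u True = 1"
    using EU_complement_step[OF u] by (simp add: add_divide_distrib[symmetric] add.commute)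
qed

end

lemma expect_cond_Some:
  assumes "stochastic P" and measure: "\<And>l. l \<in> leaves P \<Longrightarrow> 0 \<le> M l \<and> M l \<le> 1"
  shows "expect (Some P) (\<lambda>l. (1 - M l) * g l) = expect (cond (Some P) M) g * (1 - expect (Some P) M)"
proof (cases "1 \<le> expect (Some P) M")
  case False
  interpret conditioning P M
    using assms False by unfold_locales auto
  show ?thesis
    using False expect_condition by (simp add: cond_Some)
next
  case True
  have nonneg: "0 \<le> vis P l * (1 - M l)" if "l \<in> leaves P" for l
    using stochastic_vis_nonneg[OF assms(1)] measure[OF that] that by (simp add: leaves_def)
  have "(\<Sum>l\<in>leaves P. vis P l * (1 - M l)) = 1 - expect (Some P) M"
    using leaf_mass_stochastic[OF assms(1)] by (simp add: expect_def algebra_simps sum_subtractf)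
  moreover have "0 \<le> (\<Sum>l\<in>leaves P. vis P l * (1 - M l))"
    using nonneg by (rule sum_nonneg)
  ultimately have "(\<Sum>l\<in>leaves P. vis P l * (1 - M l)) = 0"
    using True by linarith
  then have zero: "\<forall>l\<in>leaves P. vis P l * (1 - M l) = 0"
    using sum_nonneg_eq_0_iff[of "leaves P" "\<lambda>l. vis P l * (1 - M l)"] finite_leaves nonneg by blast
  have "expect (Some P) (\<lambda>l. (1 - M l) * g l) = (\<Sum>l\<in>leaves P. (vis P l * (1 - M l)) * g l)"
    by (simp add: expect_def mult.assoc)
  also have "\<dots> = 0"
    using zero by (intro sum.neutral) simp
  finally show ?thesis
    using True by (simp add: cond_Some expect_def)
qed

section \<open>Dominated measures\<close>

definition dom_mass :: "bool \<Rightarrow> proto option \<Rightarrow> real" where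
  "dom_mass p Q = expect Q (domM p Q)"

lemma domM_None [simp]: "domM p None = (\<lambda>_. 0)"
  by (simp add: domM_def)

lemma dom_mass_None [simp]: "dom_mass p None = 0"
  by (simp add: dom_mass_def expect_def)

lemma domM_Some: "domM p (Some P) = domM_aux p (rounds P) P"
  by (simp add: domM_def)

lemma domM_aux_Suc:
  assumes "rounds P = Suc n"
  shows "domM_aux p (Suc n) P l =
    (if edge P [] (hd l) = 0 then 0
     else if edge P [] (hd l) = 1 \<or> ctrlA P [] = p \<or> dom_mass p (sub P [hd l]) \<le> dom_mass p (sub P [\<not> hd l])
     then domM p (sub P [hd l]) (tl l)
     else dom_mass p (sub P [\<not> hd l]) / dom_mass p (sub P [hd l]) * domM p (sub P [hd l]) (tl l))"
proof -
  have "(case sub P [c] of None \<Rightarrow> (\<lambda>_. 0) | Some Q \<Rightarrow> domM_aux p n Q) = domM p (sub P [c])" for c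
    using assms by (simp add: sub_eq_subtree domM_def)
  then show ?thesis
    by (simp only: domM_aux.simps Let_def dom_mass_def)
qed

declare domM_aux.simps(2) [simp del]

lemma sub_child_cases:
  assumes "stochastic P" and "rounds P = Suc n"
  obtains (absent) "edge P [] c = 0" "sub P [c] = None"
  | (present) "0 < edge P [] c" "sub P [c] = Some (subtree P [c])"
    "stochastic (subtree P [c])" "rounds (subtree P [c]) = n"
  using stochastic_edge_nonneg[OF assms(1), of "[]" c] stochastic_subtree[OF assms(1), of "[c]"] assms(2)
  by (cases "edge P [] c = 0") (auto simp: sub_eq_subtree)

lemma domM_bounds: "stochastic P \<Longrightarrow> 0 \<le> domM p (Some P) l \<and> domM p (Some P) l \<le> 1"
proof (induction "rounds P" arbitrary: P l)
  case 0
  then show ?case by (simp add: domM_Some)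
next
  case (Suc n)
  have child: "0 \<le> domM p (sub P [c]) w \<and> domM p (sub P [c]) w \<le> 1" for c w
    by (rule sub_child_cases[OF Suc.prems Suc.hyps(2)[symmetric], of c]) (use Suc.hyps(1) in auto)
  have mass: "0 \<le> dom_mass p (sub P [c]) \<and> dom_mass p (sub P [c]) \<le> 1" for c
  proof (cases rule: sub_child_cases[OF Suc.prems Suc.hyps(2)[symmetric], of c, case_names absent present])
    case present
    then show ?thesis
      using expect_bounds[of "subtree P [c]" "domM p (Some (subtree P [c]))"] child[of c]
      by (simp add: dom_mass_def)
  qed simp
  let ?b = "hd l"
  let ?r = "dom_mass p (sub P [\<not> ?b]) / dom_mass p (sub P [?b])"
  have "0 \<le> ?r \<and> ?r \<le> 1" if "\<not> dom_mass p (sub P [?b]) \<le> dom_mass p (sub P [\<not> ?b])"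
    using that mass[of ?b] mass[of "\<not> ?b"] by auto
  then show ?case
    using child[of ?b "tl l"] Suc.hyps(2)[symmetric]
    by (auto simp: domM_Some domM_aux_Suc mult_le_one simp del: times_divide_eq_left)
qed

lemma dom_mass_bounds: "stochastic P \<Longrightarrow> 0 \<le> dom_mass p (Some P) \<and> dom_mass p (Some P) \<le> 1"
  unfolding dom_mass_def by (rule expect_bounds) (auto simp: domM_bounds)

lemma dom_mass_base: "rounds P = 0 \<Longrightarrow> dom_mass p (Some P) = (if out P [] = p then 1 else 0)"
  by (simp add: dom_mass_def expect_def domM_Some leaves_def)

lemma domM_out_zero: "l \<in> leaves P \<Longrightarrow> out P l \<noteq> p \<Longrightarrow> domM p (Some P) l = 0"
proof (induction "rounds P" arbitrary: P l)
  case 0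
  then show ?case by (simp add: domM_Some leaves_def)
next
  case (Suc n)
  then obtain b w where l: "l = b # w" and w: "w \<in> leaves (subtree P [b])"
    by (cases l) (auto simp: leaves_def)
  have "domM p (sub P [b]) w = 0"
    using Suc.hyps(1)[of "subtree P [b]" w] Suc.hyps(2) Suc.prems(2) l w by (simp add: sub_eq_subtree)
  then show ?case
    using Suc.hyps(2)[symmetric] l by (simp add: domM_Some domM_aux_Suc)
qed

lemma dom_mass_step:
  fixes p :: bool
  assumes "rounds P = Suc n"
  defines "T \<equiv> \<lambda>b. if edge P [] b = 0 then 0 else edge P [] b *
       (if edge P [] b = 1 \<or> ctrlA P [] = p \<or> dom_mass p (sub P [b]) \<le> dom_mass p (sub P [\<not> b])
        then dom_mass p (sub P [b])
        else dom_mass p (sub P [\<not> b]) / dom_mass p (sub P [b]) * dom_mass p (sub P [b]))"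
  shows "dom_mass p (Some P) = T True + T False"
proof -
  have "edge P [] b * (\<Sum>w | length w = n. vis (subtree P [b]) w * domM_aux p (Suc n) P (b # w)) = T b" for b
  proof (cases "edge P [] b = 0")
    case False
    let ?k = "if edge P [] b = 1 \<or> ctrlA P [] = p \<or> dom_mass p (sub P [b]) \<le> dom_mass p (sub P [\<not> b])
      then 1 else dom_mass p (sub P [\<not> b]) / dom_mass p (sub P [b])"
    have "(\<Sum>w | length w = n. vis (subtree P [b]) w * domM_aux p (Suc n) P (b # w))
        = (\<Sum>w | length w = n. ?k * (vis (subtree P [b]) w * domM p (sub P [b]) w))"
      using False by (intro sum.cong) (simp_all add: domM_aux_Suc[OF assms(1)])
    also have "\<dots> = ?k * dom_mass p (sub P [b])"
      unfolding sum_distrib_left[symmetric]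
      using False assms(1) by (simp add: dom_mass_def sub_eq_subtree expect_def leaves_def)
    finally show ?thesis
      using False by (simp add: T_def)
  qed (simp add: T_def)
  then show ?thesis
    using leaf_sum_first_bit[OF assms(1), of "domM_aux p (Suc n) P"] assms(1)
    by (simp add: dom_mass_def expect_def domM_Some)
qed

lemma dom_mass_step_own:
  assumes "rounds P = Suc n" and "ctrlA P [] = p"
  shows "dom_mass p (Some P) =
    edge P [] True * dom_mass p (sub P [True]) + edge P [] False * dom_mass p (sub P [False])"
  using dom_mass_step[OF assms(1), of p] assms(2) by simp

lemma dom_mass_step_opponent:
  assumes "stochastic P" and "rounds P = Suc n" and "ctrlA P [] \<noteq> p"
  shows "dom_mass p (Some P) =
    (if edge P [] True = 0 then dom_mass p (sub P [False])
     else if edge P [] False = 0 then dom_mass p (sub P [True])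
     else min (dom_mass p (sub P [True])) (dom_mass p (sub P [False])))"
proof -
  let ?e = "edge P []" and ?D = "\<lambda>b. dom_mass p (sub P [b])"
  have e1: "?e False + ?e True = 1"
    using stochastic_edge_sum[OF assms(1), of "[]"] assms(2) by simp
  have D: "0 \<le> ?D b" for b
    by (rule sub_child_cases[OF assms(1,2), of b]) (auto simp: dom_mass_bounds)
  have "?e True \<noteq> 0 \<Longrightarrow> ?e False \<noteq> 0 \<Longrightarrow> ?e b \<noteq> 1" for b
    using e1 by (cases b) auto
  moreover have convex: "?e False * x + ?e True * x = x" for x
    using e1 by (metis distrib_right mult_1)
  ultimately show ?thesis
    using dom_mass_step[OF assms(2), of p] assms(3) e1 D[of True] D[of False]
    by (auto simp: min_def algebra_simps convex)
qed

lemma dom_mass_opponent_argmin: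
  assumes "stochastic P" and "rounds P = Suc n" and "ctrlA P [] \<noteq> p"
  obtains c where "0 < edge P [] c" and "dom_mass p (Some P) = dom_mass p (sub P [c])"
    and "\<And>d. 0 < edge P [] d \<Longrightarrow> dom_mass p (sub P [c]) \<le> dom_mass p (sub P [d])"
proof -
  let ?e = "edge P []" and ?D = "\<lambda>b. dom_mass p (sub P [b])"
  have "0 \<le> ?e b" for b
    using stochastic_edge_nonneg[OF assms(1)] assms(2) by simp
  moreover have "?e False + ?e True = 1"
    using stochastic_edge_sum[OF assms(1), of "[]"] assms(2) by simp
  ultimately show thesis
    using that[of "if ?e True = 0 then False else if ?e False = 0 then True else ?D True \<le> ?D False"]
      dom_mass_step_opponent[OF assms]
    by (smt (verit))
qed

section \<open>Optimal attacks\<close>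

lemma attack_simps [simp]:
  "rounds (attack P a \<sigma>) = rounds P"
  "ctrlA (attack P a \<sigma>) = ctrlA P"
  "out (attack P a \<sigma>) = out P"
  "edge (attack P a \<sigma>) u b = (if ctrlA P u = a then (if \<sigma> u = b then 1 else 0) else edge P u b)"
  by (simp_all add: attack_def)

lemma leaves_attack [simp]: "leaves (attack P a \<sigma>) = leaves P"
  by (simp add: leaves_def)

lemma subtree_attack: "subtree (attack P a \<sigma>) u = attack (subtree P u) a (\<lambda>w. \<sigma> (u @ w))"
  by (simp add: subtree_def attack_def fun_eq_iff)

lemma vis_attack_Cons:
  "vis (attack P a \<sigma>) (b # w) = edge (attack P a \<sigma>) [] b * vis (attack (subtree P [b]) a (\<lambda>w. \<sigma> (b # w))) w"
  by (simp add: vis_Cons subtree_attack)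

lemma stochastic_attack:
  assumes "stochastic P" and "valid_attack P a \<sigma>"
  shows "stochastic (attack P a \<sigma>)"
  using assms stochastic_edge_nonneg[OF assms(1)] stochastic_edge_sum[OF assms(1)]
  by (auto simp: stochastic_def valid_attack_def)

lemma valid_attack_base: "rounds P = 0 \<Longrightarrow> valid_attack P a \<sigma>"
  by (simp add: valid_attack_def)

lemma valid_attack_subtree:
  assumes "valid_attack P a \<sigma>" and "rounds P = Suc n" and "0 < edge (attack P a \<sigma>) [] b"
  shows "0 < edge P [] b" and "valid_attack (subtree P [b]) a (\<lambda>w. \<sigma> (b # w))"
proof -
  show pos: "0 < edge P [] b"
    using assms vis_single[of "attack P a \<sigma>" b] unfolding valid_attack_def
    by (auto dest!: spec[of _ "[b]"])
  show "valid_attack (subtree P [b]) a (\<lambda>w. \<sigma> (b # w))"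
    unfolding valid_attack_def
  proof (intro allI impI)
    fix w assume "length w \<le> rounds (subtree P [b])"
      and "0 < vis (attack (subtree P [b]) a (\<lambda>w. \<sigma> (b # w))) w"
    then have "0 < vis P (b # w)"
      using assms vis_attack_Cons[of P a \<sigma> b w] unfolding valid_attack_def by simp
    then show "0 < vis (subtree P [b]) w"
      using pos by (simp add: vis_Cons zero_less_mult_iff)
  qed
qed

lemma valid_attack_from_subtrees:
  assumes "stochastic P" and "rounds P = Suc n"
    and "\<And>b. 0 < edge (attack P a \<sigma>) [] b \<Longrightarrow>
      0 < edge P [] b \<and> valid_attack (subtree P [b]) a (\<lambda>w. \<sigma> (b # w))"
  shows "valid_attack P a \<sigma>"
  unfolding valid_attack_def
proof (intro allI impI)
  fix u assume u: "length u \<le> rounds P" and pos: "0 < vis (attack P a \<sigma>) u"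
  show "0 < vis P u"
  proof (cases u)
    case (Cons b w)
    have "0 \<le> edge (attack P a \<sigma>) [] b"
      using stochastic_edge_nonneg[OF assms(1)] assms(2) by simp
    moreover have "0 \<le> vis (attack (subtree P [b]) a (\<lambda>w. \<sigma> (b # w))) w"
      using u Cons by (intro vis_nonneg) (auto simp: stochastic_edge_nonneg[OF assms(1)])
    ultimately have "0 < edge (attack P a \<sigma>) [] b" "0 < vis (attack (subtree P [b]) a (\<lambda>w. \<sigma> (b # w))) w"
      using pos Cons vis_attack_Cons[of P a \<sigma> b w] by (auto simp: zero_less_mult_iff)
    then show ?thesis
      using assms(2,3) u Cons unfolding valid_attack_def by (auto simp: vis_Cons)
  qed simp
qed

definition win_prob :: "bool \<Rightarrow> proto \<Rightarrow> (bool list \<Rightarrow> bool) \<Rightarrow> real" where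
  "win_prob p P \<sigma> = (\<Sum>l\<in>leaves P. vis (attack P (\<not> p) \<sigma>) l * (if out P l = p then 1 else 0))"

lemma win_prob_base: "rounds P = 0 \<Longrightarrow> win_prob p P \<sigma> = (if out P [] = p then 1 else 0)"
  by (simp add: win_prob_def leaves_def)

lemma win_prob_step:
  assumes "rounds P = Suc n"
  shows "win_prob p P \<sigma> =
      edge (attack P (\<not> p) \<sigma>) [] True * win_prob p (subtree P [True]) (\<lambda>w. \<sigma> (True # w))
    + edge (attack P (\<not> p) \<sigma>) [] False * win_prob p (subtree P [False]) (\<lambda>w. \<sigma> (False # w))"
  using leaf_sum_first_bit[of "attack P (\<not> p) \<sigma>" n "\<lambda>l. if out P l = p then 1 else 0"] assms
  by (simp add: win_prob_def leaves_def subtree_attack)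

lemma dom_mass_le_win_prob:
  assumes "stochastic P" and "valid_attack P (\<not> p) \<sigma>"
  shows "dom_mass p (Some P) \<le> win_prob p P \<sigma>"
  using assms
proof (induction "rounds P" arbitrary: P \<sigma>)
  case 0
  then show ?case by (simp add: dom_mass_base win_prob_base)
next
  case (Suc n)
  let ?a = "edge (attack P (\<not> p) \<sigma>) []"
  have rounds: "rounds P = Suc n"
    using Suc.hyps(2) by simp
  have child: "0 < edge P [] b \<and> dom_mass p (sub P [b]) \<le> win_prob p (subtree P [b]) (\<lambda>w. \<sigma> (b # w))"
    if "0 < ?a b" for b
  proof -
    have "0 < edge P [] b" and "valid_attack (subtree P [b]) (\<not> p) (\<lambda>w. \<sigma> (b # w))"
      using valid_attack_subtree[OF Suc.prems(2) rounds that] by blast+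
    then show ?thesis
      using Suc.hyps(1)[of "subtree P [b]"] stochastic_subtree[OF Suc.prems(1), of "[b]"] rounds
      by (simp add: sub_eq_subtree)
  qed
  show ?case
  proof (cases "ctrlA P [] = p")
    case True
    then have a: "?a b = edge P [] b" for b
      by simp
    have "edge P [] b * dom_mass p (sub P [b]) \<le> edge P [] b * win_prob p (subtree P [b]) (\<lambda>w. \<sigma> (b # w))" for b
      using child[of b] stochastic_edge_nonneg[OF Suc.prems(1), of "[]" b] rounds a[of b]
      by (cases "edge P [] b = 0") (auto intro: mult_left_mono)
    then show ?thesis
      using dom_mass_step_own[OF rounds True] win_prob_step[OF rounds, of p \<sigma>] a by (simp add: add_mono)
  next
    case False
    obtain c where "dom_mass p (Some P) = dom_mass p (sub P [c])"
      and "\<And>d. 0 < edge P [] d \<Longrightarrow> dom_mass p (sub P [c]) \<le> dom_mass p (sub P [d])"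
      using dom_mass_opponent_argmin[OF Suc.prems(1) rounds False] by metis
    moreover have "win_prob p P \<sigma> = win_prob p (subtree P [\<sigma> []]) (\<lambda>w. \<sigma> (\<sigma> [] # w))"
      using win_prob_step[OF rounds, of p \<sigma>] False by (cases "\<sigma> []") simp_all
    moreover have "0 < ?a (\<sigma> [])"
      using False by simp
    ultimately show ?thesis
      using child[of "\<sigma> []"] by fastforce
  qed
qed

definition graft :: "bool \<Rightarrow> (bool \<Rightarrow> bool list \<Rightarrow> bool) \<Rightarrow> bool list \<Rightarrow> bool" where
  "graft c F u = (case u of [] \<Rightarrow> c | b # w \<Rightarrow> F b w)"

lemma graft_Nil [simp]: "graft c F [] = c"
  by (simp add: graft_def)

lemma graft_Cons [simp]: "(\<lambda>w. graft c F (b # w)) = F b"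
  by (simp add: graft_def)

lemma dom_mass_attained:
  assumes "stochastic P"
  shows "\<exists>\<sigma>. valid_attack P (\<not> p) \<sigma> \<and> win_prob p P \<sigma> = dom_mass p (Some P)"
  using assms
proof (induction "rounds P" arbitrary: P)
  case 0
  then show ?case by (simp add: dom_mass_base win_prob_base valid_attack_base)
next
  case (Suc n)
  have rounds: "rounds P = Suc n"
    using Suc.hyps(2) by simp
  have "\<exists>\<sigma>. 0 < edge P [] b \<longrightarrow>
      valid_attack (subtree P [b]) (\<not> p) \<sigma> \<and> win_prob p (subtree P [b]) \<sigma> = dom_mass p (sub P [b])" for b
    using Suc.hyps(1)[of "subtree P [b]"] stochastic_subtree[OF Suc.prems, of "[b]"] rounds
    by (simp add: sub_eq_subtree)
  then obtain F where F: "\<And>b. 0 < edge P [] b \<Longrightarrow>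
      valid_attack (subtree P [b]) (\<not> p) (F b) \<and> win_prob p (subtree P [b]) (F b) = dom_mass p (sub P [b])"
    by metis
  have valid: "valid_attack P (\<not> p) (graft c F)"
    if "\<And>b. 0 < edge (attack P (\<not> p) (graft c F)) [] b \<Longrightarrow> 0 < edge P [] b" for c
    using valid_attack_from_subtrees[OF Suc.prems rounds] F that by simp
  show ?case
  proof (cases "ctrlA P [] = p")
    case True
    have child: "edge P [] b * win_prob p (subtree P [b]) (F b) = edge P [] b * dom_mass p (sub P [b])" for b
      using F[of b] stochastic_edge_nonneg[OF Suc.prems, of "[]" b] rounds
      by (cases "edge P [] b = 0") auto
    have "win_prob p P (graft True F) = edge P [] True * win_prob p (subtree P [True]) (F True)
        + edge P [] False * win_prob p (subtree P [False]) (F False)"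
      using win_prob_step[OF rounds, of p "graft True F"] True by simp
    also have "\<dots> = dom_mass p (Some P)"
      unfolding child dom_mass_step_own[OF rounds True] ..
    finally have "win_prob p P (graft True F) = dom_mass p (Some P)" .
    moreover have "valid_attack P (\<not> p) (graft True F)"
      using valid True by simp
    ultimately show ?thesis by blast
  next
    case False
    obtain c where c: "0 < edge P [] c" "dom_mass p (Some P) = dom_mass p (sub P [c])"
      using dom_mass_opponent_argmin[OF Suc.prems rounds False] by metis
    have "win_prob p P (graft c F) = dom_mass p (Some P)"
      using win_prob_step[OF rounds, of p "graft c F"] False F[OF c(1)] c(2) by (cases c) simp_all
    moreover have "valid_attack P (\<not> p) (graft c F)"
      by (rule valid) (use False c(1) in \<open>auto split: if_splits\<close>)
    ultimately show ?thesis by blast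
  qed
qed

lemma Sup_complement_win_prob:
  assumes "stochastic P"
  shows "Sup {1 - win_prob p P \<sigma> | \<sigma>. valid_attack P (\<not> p) \<sigma>} = 1 - dom_mass p (Some P)"
proof (rule cSup_eq_maximum)
  show "1 - dom_mass p (Some P) \<in> {1 - win_prob p P \<sigma> | \<sigma>. valid_attack P (\<not> p) \<sigma>}"
    using dom_mass_attained[OF assms, of p] by force
  show "x \<le> 1 - dom_mass p (Some P)" if "x \<in> {1 - win_prob p P \<sigma> | \<sigma>. valid_attack P (\<not> p) \<sigma>}" for x
    using that dom_mass_le_win_prob[OF assms] by force
qed

lemma BestB_Some: "stochastic P \<Longrightarrow> BestB (Some P) = 1 - dom_mass True (Some P)"
  using Sup_complement_win_prob[of P True] by (simp add: BestB_def out_exp_def win_prob_def)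

lemma out_exp_attack_A:
  assumes "stochastic P" and "valid_attack P True \<sigma>"
  shows "out_exp (attack P True \<sigma>) = 1 - win_prob False P \<sigma>"
proof -
  have "out_exp (attack P True \<sigma>) = (\<Sum>l\<in>leaves P. vis (attack P True \<sigma>) l
      - vis (attack P True \<sigma>) l * (if out P l = False then 1 else 0))"
    unfolding out_exp_def by (intro sum.cong) auto
  then show ?thesis
    using leaf_mass_stochastic[OF stochastic_attack[OF assms]] by (simp add: sum_subtractf win_prob_def)
qed

lemma BestA_Some:
  assumes "stochastic P"
  shows "BestA (Some P) = 1 - dom_mass False (Some P)"
proof -
  have "{out_exp (attack P True \<sigma>) | \<sigma>. valid_attack P True \<sigma>}
      = {1 - win_prob False P \<sigma> | \<sigma>. valid_attack P (\<not> False) \<sigma>}"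
    using out_exp_attack_A[OF assms] by force
  then show ?thesis
    using Sup_complement_win_prob[OF assms, of False] by (simp add: BestA_def)
qed

section \<open>The alternating sequence of conditioned protocols\<close>

definition descends_from :: "proto \<Rightarrow> proto option \<Rightarrow> bool" where
  "descends_from P Q \<longleftrightarrow> (case Q of None \<Rightarrow> True
     | Some S \<Rightarrow> stochastic S \<and> rounds S = rounds P \<and> out S = out P)"

lemma descends_from_cond:
  assumes "descends_from P Q"
  shows "descends_from P (cond Q (domM p Q))"
proof (cases Q)
  case (Some S)
  then have S: "stochastic S" "rounds S = rounds P" "out S = out P"
    using assms by (simp_all add: descends_from_def)
  show ?thesis
  proof (cases "1 \<le> expect (Some S) (domM p (Some S))")
    case False
    interpret conditioning S "domM p (Some S)"
      using S(1) False domM_bounds by unfold_locales auto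
    show ?thesis
      using Some False S stochastic_condition by (simp add: cond_Some descends_from_def)
  qed (simp add: Some cond_Some descends_from_def)
qed (simp add: cond_def descends_from_def)

lemma descends_from_seqA: "valid_proto P \<Longrightarrow> descends_from P (seqA P j)"
proof (induction j)
  case 0
  then show ?case by (simp add: descends_from_def valid_proto_stochastic)
next
  case (Suc j)
  then show ?case by (simp add: Let_def descends_from_cond)
qed

lemma descends_from_seqB: "valid_proto P \<Longrightarrow> descends_from P (seqB P j)"
  by (simp add: seqB_def descends_from_cond descends_from_seqA)

lemma alpha_eq_dom_mass: "valid_proto P \<Longrightarrow> alpha P j = dom_mass True (seqA P j)"
  using descends_from_seqA[of P j]
  by (cases "seqA P j") (simp_all add: alpha_def BestB_def[of None] BestB_Some descends_from_def)

lemma beta_eq_dom_mass: "valid_proto P \<Longrightarrow> beta P j = dom_mass False (seqB P j)"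
  using descends_from_seqB[of P j]
  by (cases "seqB P j") (simp_all add: beta_def BestA_def[of None] BestA_Some descends_from_def)

lemma domM_bounds_descends: "descends_from P Q \<Longrightarrow> 0 \<le> domM p Q l \<and> domM p Q l \<le> 1"
  by (cases Q) (simp_all add: descends_from_def domM_bounds)

lemma domM_out_zero_descends:
  "descends_from P Q \<Longrightarrow> l \<in> leaves P \<Longrightarrow> out P l \<noteq> p \<Longrightarrow> domM p Q l = 0"
  by (cases Q) (auto simp: descends_from_def leaves_def intro!: domM_out_zero)

lemma expect_cond_domM:
  assumes "descends_from P Q"
  shows "expect Q (\<lambda>l. (1 - domM p Q l) * g l) = expect (cond Q (domM p Q)) g * (1 - dom_mass p Q)"
  using assms expect_cond_Some[of _ "domM p Q" g]
  by (cases Q) (simp_all add: descends_from_def cond_def expect_def dom_mass_def domM_bounds)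

lemma expect_seqA_Suc:
  assumes "valid_proto P"
  shows "expect (seqA P j) (\<lambda>l. (1 - domM True (seqA P j) l) * ((1 - domM False (seqB P j) l) * f l))
       = expect (seqA P (Suc j)) f * (1 - dom_mass False (seqB P j)) * (1 - dom_mass True (seqA P j))"
  using expect_cond_domM[OF descends_from_seqB[OF assms, of j], of False f]
    expect_cond_domM[OF descends_from_seqA[OF assms, of j], of True
      "\<lambda>l. (1 - domM False (seqB P j) l) * f l"]
  by (simp add: seqB_def Let_def)

lemma expect_times_survival:
  assumes "valid_proto P"
  shows "expect (Some P) (\<lambda>l. f l * (\<Prod>t<j. (1 - domM True (seqA P t) l) * (1 - domM False (seqB P t) l)))
       = expect (seqA P j) f * (\<Prod>t<j. (1 - dom_mass False (seqB P t)) * (1 - dom_mass True (seqA P t)))"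
proof (induction j arbitrary: f)
  case (Suc j)
  let ?f = "\<lambda>l. (1 - domM True (seqA P j) l) * ((1 - domM False (seqB P j) l) * f l)"
  have "expect (Some P) (\<lambda>l. f l * (\<Prod>t<Suc j. (1 - domM True (seqA P t) l) * (1 - domM False (seqB P t) l)))
      = expect (Some P) (\<lambda>l. ?f l * (\<Prod>t<j. (1 - domM True (seqA P t) l) * (1 - domM False (seqB P t) l)))"
    by (simp add: ac_simps)
  also have "\<dots> = expect (seqA P (Suc j)) f * (\<Prod>t<Suc j. (1 - dom_mass False (seqB P t)) * (1 - dom_mass True (seqA P t)))"
    unfolding Suc.IH expect_seqA_Suc[OF assms] by (simp add: ac_simps)
  finally show ?case .
qed simp

lemma sum_first_success:
  "(\<Sum>j\<le>z. x j * (\<Prod>t<j. 1 - x t)) = 1 - (\<Prod>t<Suc z. 1 - (x t :: 'a :: comm_ring_1))"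
  by (induction z) (simp_all add: algebra_simps)

lemma CA_leaf_bounds:
  assumes "valid_proto P" and "l \<in> leaves P"
  shows "0 \<le> CA P z l \<and> CA P z l \<le> 1 \<and> (\<not> out P l \<longrightarrow> CA P z l = 0)"
proof -
  let ?M = "\<lambda>t. domM True (seqA P t) l"
  have M: "0 \<le> ?M t \<and> ?M t \<le> 1" for t
    using domM_bounds_descends[OF descends_from_seqA[OF assms(1)]] .
  have "CA P z l = 1 - (\<Prod>t<Suc z. 1 - ?M t)"
    unfolding CA_def by (rule sum_first_success)
  moreover have "0 \<le> (\<Prod>t<Suc z. 1 - ?M t)"
    using M by (intro prod_nonneg) simp
  moreover have "(\<Prod>t<Suc z. 1 - ?M t) \<le> 1"
    using M by (intro prod_le_1) simp
  moreover have "\<not> out P l \<Longrightarrow> CA P z l = 0"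
    using domM_out_zero_descends[OF descends_from_seqA[OF assms(1)] assms(2)] by (simp add: CA_def)
  ultimately show ?thesis by simp
qed

lemma expect_CA:
  assumes "valid_proto P"
  shows "expect (Some P) (CA P z) = (\<Sum>j\<le>z. dom_mass True (seqA P j) *
    (\<Prod>t<j. (1 - dom_mass False (seqB P t)) * (1 - dom_mass True (seqA P t))))"
proof -
  let ?M = "\<lambda>t. domM True (seqA P t)" and ?N = "\<lambda>t. domM False (seqB P t)"
  have insert_B_factors: "?M j l * (\<Prod>t<j. 1 - ?M t l) = ?M j l * (\<Prod>t<j. (1 - ?M t l) * (1 - ?N t l))"
    if "l \<in> leaves P" for j l
    using domM_out_zero_descends[OF descends_from_seqA[OF assms] that, of True]
      domM_out_zero_descends[OF descends_from_seqB[OF assms] that, of False]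
    by (cases "out P l") simp_all
  have "expect (Some P) (CA P z) = (\<Sum>j\<le>z. expect (Some P) (\<lambda>l. ?M j l * (\<Prod>t<j. 1 - ?M t l)))"
    unfolding CA_def expect_def by (simp add: sum_distrib_left sum.swap[of _ "leaves P"])
  also have "\<dots> = (\<Sum>j\<le>z. expect (Some P) (\<lambda>l. ?M j l * (\<Prod>t<j. (1 - ?M t l) * (1 - ?N t l))))"
    unfolding expect_def option.case by (intro sum.cong refl) (simp add: insert_B_factors)
  also have "\<dots> = (\<Sum>j\<le>z. dom_mass True (seqA P j) *
      (\<Prod>t<j. (1 - dom_mass False (seqB P t)) * (1 - dom_mass True (seqA P t))))"
    by (simp add: expect_times_survival[OF assms] dom_mass_def)
  finally show ?thesis .
qed

theorem lemma3p24:
  fixes P :: proto and z :: nat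
  assumes "valid_proto P"
  shows "(\<forall>l\<in>leaves P. 0 \<le> CA P z l \<and> CA P z l \<le> 1 \<and> (\<not> out P l \<longrightarrow> CA P z l = 0))
       \<and> expect (Some P) (CA P z)
         = (\<Sum>j\<le>z. alpha P j * (\<Prod>t<j. (1 - beta P t) * (1 - alpha P t)))"
  using CA_leaf_bounds[OF assms] expect_CA[OF assms]
  by (simp add: alpha_eq_dom_mass[OF assms] beta_eq_dom_mass[OF assms])

end
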